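(* Let $s\ge 1$ and $n>1$ be integers, and let $A$ be a commutative ring with identity in which $-1$ is not a sum of squares. Then $p_{2s}(A[x_1,\dots,x_n])=\infty$.
   Context: For a commutative ring $A$ with identity and a positive integer $m$, the $m$-th Pythagoras number $p_m(A)$ is the least positive integer $\ell$ such that every element of $A$ that is a sum of $m$-th powers of elements of $A$ can be written as a sum of at most $\ell$ $m$-th powers of elements of $A$; if no such $\ell$ exists, $p_m(A)=\infty$. *)

theory Defs
  imports Main "HOL-Library.Poly_Mapping" "HOL-Library.Extended_Nat"
begin

text \<open>Pythagoras numbers of a subring S of a commutative ring (the ring A itself is S = UNIV).\<close>

definition sum_of_powers_len :: "'a::comm_ring_1 set \<Rightarrow> nat \<Rightarrow> nat \<Rightarrow> 'a \<Rightarrow> bool" where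
  "sum_of_powers_len S m l y \<longleftrightarrow> (\<exists>f. (\<forall>i<l. f i \<in> S) \<and> y = (\<Sum>i<l. f i ^ m))"

definition sum_of_powers :: "'a::comm_ring_1 set \<Rightarrow> nat \<Rightarrow> 'a \<Rightarrow> bool" where
  "sum_of_powers S m y \<longleftrightarrow> (\<exists>l. sum_of_powers_len S m l y)"

definition pythagoras_number :: "'a::comm_ring_1 set \<Rightarrow> nat \<Rightarrow> enat" where
  "pythagoras_number S m =
     (if \<exists>l>0. \<forall>y. y \<in> S \<and> sum_of_powers S m y \<longrightarrow> (\<exists>k\<le>l. sum_of_powers_len S m k y)
      then enat (LEAST l. l > 0 \<and> (\<forall>y. y \<in> S \<and> sum_of_powers S m y \<longrightarrow> (\<exists>k\<le>l. sum_of_powers_len S m k y)))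
      else \<infinity>)"

text \<open>The polynomial ring A[x_1,...,x_n] is the subring of polynomials only involving
  the variables with index < n (variable x_i has index i-1).\<close>

type_synonym 'a mpoly_pm = "(nat \<Rightarrow>\<^sub>0 nat) \<Rightarrow>\<^sub>0 'a"

definition poly_ring_n :: "nat \<Rightarrow> 'a::comm_ring_1 mpoly_pm set" where
  "poly_ring_n n = {p. \<forall>mon \<in> Poly_Mapping.keys p. Poly_Mapping.keys mon \<subseteq> {..<n}}"

end

theory Submission
  imports Defs "Jordan_Normal_Form.Determinant" "Jordan_Normal_Form.Char_Poly"
begin

text \<open>Let \<open>P\<close> be an ideal of \<open>A\<close> maximal among those avoiding \<open>1 + \<Sigma>A\<^sup>2\<close>. Since \<open>-1\<close>
  is not a sum of squares, \<open>P\<close> is prime and \<open>B = A/P\<close> is a real domain: a vanishing sum of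
  squares in \<open>B\<close> has vanishing terms. Let \<open>L i\<close> vanish at the nodes \<open>0, \<dots>, N - 1\<close> except \<open>i\<close>
  and suppose \<open>\<Sigma>\<^sub>i (L i (x\<^sub>1) L i (x\<^sub>2))^(2s) = \<Sigma>\<^sub>j\<^sub><\<^sub>l g\<^sub>j^(2s)\<close>. Mapped to \<open>B[x, y]\<close>,
  realness forces \<open>g\<^sub>j(a, y) = c j a \<cdot> L a (y)\<close> and \<open>g\<^sub>j(x, b) = c j b \<cdot> L b (x)\<close> at all nodes.
  Differentiating in \<open>x\<close> at \<open>x = a\<close> and evaluating at \<open>y = b \<noteq> a\<close> gives
  \<open>\<Sigma>\<^sub>j c j a^(2s - 1) c j b = 0\<close>, whereas \<open>\<Sigma>\<^sub>j c j a^(2s) \<noteq> 0\<close>. Hence a product of an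
  \<open>N \<times> l\<close> and an \<open>l \<times> N\<close> matrix is an invertible diagonal matrix, so \<open>N \<le> l\<close>; as \<open>N\<close> is
  arbitrary, no bound on the number of \<open>2s\<close>-th powers exists.\<close>

(* HOL-Algebra's module.smult would otherwise shadow the polynomial smult *)
hide_const (open) module.smult

section \<open>Linear algebra and interpolation\<close>

lemma biorthogonal_card_le:
  fixes v w :: "nat \<Rightarrow> nat \<Rightarrow> 'a::idom"
  assumes biorth: "\<And>a b. a < N \<Longrightarrow> b < N \<Longrightarrow>
      (\<Sum>j<l. v j a * w j b) = (if a = b then \<mu> a else 0)"
    and nonzero: "\<And>a. a < N \<Longrightarrow> \<mu> a \<noteq> 0"
  shows "N \<le> l"
proof (rule ccontr)
  assume "\<not> N \<le> l"
  then have "l < N" by simp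
  define V where "V = mat N N (\<lambda>(a, j). if j < l then v j a else 0)"
  define W where "W = mat N N (\<lambda>(j, b). if j < l then w j b else 0)"
  define D where "D = mat N N (\<lambda>(a, b). if a = b then \<mu> a else 0)"
  have "V * W = D"
  proof (rule eq_matI)
    fix a b assume "a < dim_row D" "b < dim_col D"
    then have ab: "a < N" "b < N" by (simp_all add: D_def)
    have "(V * W) $$ (a, b) = (\<Sum>j<N. if j < l then v j a * w j b else 0)"
      using ab by (auto simp: V_def W_def scalar_prod_def atLeast0LessThan intro: sum.cong)
    also have "\<dots> = (\<Sum>j<l. v j a * w j b)"
    proof -
      have "{..<N} \<inter> {j. j < l} = {..<l}" using \<open>l < N\<close> by auto
      then show ?thesis by (simp add: sum.If_cases)
    qed
    finally show "(V * W) $$ (a, b) = D $$ (a, b)" using biorth[OF ab] ab by (simp add: D_def)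
  qed (simp_all add: V_def W_def D_def)
  have "det W = 0"
  proof -
    have "W = mat\<^sub>r N N (\<lambda>j. if j = l then 0\<^sub>v N else row W j)"
      by (rule eq_matI) (auto simp: W_def)
    also have "det \<dots> = 0"
      by (rule det_row_0) (use \<open>l < N\<close> in \<open>auto simp: W_def\<close>)
    finally show ?thesis .
  qed
  moreover have "det D = (\<Prod>a<N. \<mu> a)"
    by (subst det_upper_triangular[of _ N])
       (auto simp: D_def upper_triangular_def prod_list_diag_prod atLeast0LessThan)
  moreover have "det D = det V * det W"
    unfolding \<open>V * W = D\<close>[symmetric] by (rule det_mult[of V N W]) (simp_all add: V_def W_def)
  ultimately show False using nonzero by simp
qed

lemma poly_eq_smult_prod_of_roots:
  fixes p :: "'a::idom poly" and f :: "nat \<Rightarrow> 'a"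
  assumes "finite I" "inj_on f I" "degree p \<le> card I" "\<And>m. m \<in> I \<Longrightarrow> poly p (f m) = 0"
  shows "p = smult (coeff p (card I)) (\<Prod>m\<in>I. [:- f m, 1:])"
proof -
  define L where "L = (\<Prod>m\<in>I. [:- f m, 1:])"
  define q where "q = p - smult (coeff p (card I)) L"
  have "degree L = card I"
    unfolding L_def by (subst degree_prod_sum_eq) auto
  moreover have "lead_coeff L = 1"
    by (simp add: L_def lead_coeff_prod)
  ultimately have "coeff q (card I) = 0" "degree q \<le> card I"
    using assms(3) by (auto simp: q_def intro!: degree_diff_le)
  then have "degree q < card I \<or> q = 0"
    by (metis leading_coeff_0_iff le_neq_implies_less)
  moreover have "f ` I \<subseteq> {x. poly q x = 0}"
    using assms(1,4) by (auto simp: q_def L_def poly_prod)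
  ultimately have "q = 0"
  proof (elim disjE)
    assume "degree q < card I" "f ` I \<subseteq> {x. poly q x = 0}"
    show "q = 0"
    proof (rule ccontr)
      assume "q \<noteq> 0"
      then have "card (f ` I) \<le> degree q"
        using card_mono[OF poly_roots_finite \<open>f ` I \<subseteq> _\<close>] card_poly_roots_bound le_trans
        by blast
      then show False using \<open>degree q < card I\<close> card_image[OF assms(2)] by simp
    qed
  qed
  then show ?thesis by (simp add: q_def L_def)
qed

interpretation const_poly_hom: comm_ring_hom "\<lambda>c. [:c:]"
  by unfold_locales simp_all

interpretation const_poly_hom: idom_hom "\<lambda>c. [:c:]" ..

interpretation map_poly_const_poly_hom: map_poly_comm_ring_hom "\<lambda>c. [:c:]" ..

lemma coeff_power_mult_degree: "coeff (p ^ n) (n * degree p) = lead_coeff (p :: 'a::idom poly) ^ n"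
proof (cases "p = 0")
  case True
  then show ?thesis by (cases n) simp_all
next
  case False
  then show ?thesis using lead_coeff_power[of p n] by (simp add: degree_power_eq mult.commute)
qed

section \<open>Real rings\<close>

definition real_ring :: "'a::comm_ring_1 itself \<Rightarrow> bool" where
  "real_ring _ \<longleftrightarrow>
     (\<forall>(x :: nat \<Rightarrow> 'a) A. finite A \<longrightarrow> (\<Sum>i\<in>A. x i ^ 2) = 0 \<longrightarrow> (\<forall>i\<in>A. x i = 0))"

context
  assumes real: "real_ring TYPE('a::idom)"
begin

lemma real_ring_sum_squares_eq_0:
  fixes x :: "nat \<Rightarrow> 'a"
  shows "finite A \<Longrightarrow> (\<Sum>i\<in>A. x i ^ 2) = 0 \<Longrightarrow> i \<in> A \<Longrightarrow> x i = 0"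
  using real unfolding real_ring_def by blast

lemma real_ring_sum_even_powers_eq_0:
  fixes x :: "nat \<Rightarrow> 'a"
  assumes "s \<ge> 1" "finite A" "(\<Sum>i\<in>A. x i ^ (2 * s)) = 0" "i \<in> A"
  shows "x i = 0"
proof -
  have "(\<Sum>i\<in>A. (x i ^ s) ^ 2) = 0"
    using assms(3) by (simp add: power_mult[symmetric] mult.commute)
  then show ?thesis
    using real_ring_sum_squares_eq_0[OF assms(2) _ assms(4), of "\<lambda>i. x i ^ s"] assms(1) by simp
qed

lemma real_ring_of_nat_neq_0: "n > 0 \<Longrightarrow> (of_nat n :: 'a) \<noteq> 0"
  using real_ring_sum_squares_eq_0[of "{..<n}" "\<lambda>_. 1" 0] by auto

lemma real_ring_of_nat_eq_iff: "(of_nat a :: 'a) = of_nat b \<longleftrightarrow> a = b"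
proof
  assume eq: "(of_nat a :: 'a) = of_nat b"
  show "a = b"
  proof (rule ccontr)
    assume "a \<noteq> b"
    then have "(of_nat (max a b - min a b) :: 'a) \<noteq> 0"
      by (intro real_ring_of_nat_neq_0) simp
    moreover have "(of_nat (max a b - min a b) :: 'a) = of_nat (max a b) - of_nat (min a b)"
      by (simp add: of_nat_diff)
    ultimately show False using eq by (simp add: max_def min_def split: if_splits)
  qed
qed simp

text \<open>In a real ring the leading terms of a sum of even powers cannot cancel.\<close>
lemma real_ring_degree_sum_even_powers:
  fixes h :: "nat \<Rightarrow> 'a poly"
  assumes "s \<ge> 1" "j < l"
  shows "2 * s * degree (h j) \<le> degree (\<Sum>i<l. h i ^ (2 * s))"
proof -
  define d where "d = Max ((\<lambda>i. degree (h i)) ` {..<l})"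
  define J where "J = {i. i < l \<and> degree (h i) = d}"
  have le_d: "degree (h i) \<le> d" if "i < l" for i
    unfolding d_def using that by (intro Max_ge) auto
  have "d \<in> (\<lambda>i. degree (h i)) ` {..<l}"
    unfolding d_def using assms(2) by (intro Max_in) auto
  then obtain i0 where "i0 \<in> J" by (auto simp: J_def)
  have top_coeff: "coeff (h i ^ (2 * s)) (2 * s * d) =
      (if i \<in> J then (lead_coeff (h i) ^ s) ^ 2 else 0)" if "i < l" for i
  proof (cases "i \<in> J")
    case True
    then show ?thesis
      using coeff_power_mult_degree[of "h i" "2 * s"]
      by (simp add: J_def power_mult[symmetric] mult.commute)
  next
    case False
    then have "degree (h i) < d" using le_d[OF that] that by (auto simp: J_def)
    have "degree (h i ^ (2 * s)) \<le> 2 * s * degree (h i)"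
      using degree_power_le[of "h i" "2 * s"] by (simp add: mult.commute)
    also have "\<dots> < 2 * s * d"
      using \<open>degree (h i) < d\<close> assms(1) by simp
    finally show ?thesis using False by (simp add: coeff_eq_0)
  qed
  have top_coeff_sum:
    "coeff (\<Sum>i<l. h i ^ (2 * s)) (2 * s * d) = (\<Sum>i\<in>J. (lead_coeff (h i) ^ s) ^ 2)"
    by (simp add: coeff_sum top_coeff sum.If_cases J_def Collect_conj_eq lessThan_def Int_commute)
  show ?thesis
  proof (cases "(\<Sum>i\<in>J. (lead_coeff (h i) ^ s) ^ 2) = 0")
    case False
    then have "2 * s * d \<le> degree (\<Sum>i<l. h i ^ (2 * s))"
      by (intro le_degree) (simp add: top_coeff_sum)
    moreover have "2 * s * degree (h j) \<le> 2 * s * d"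
      using le_d[OF assms(2)] by simp
    ultimately show ?thesis by linarith
  next
    case True
    then have "lead_coeff (h i0) ^ s = 0"
      using real_ring_sum_squares_eq_0[of J "\<lambda>i. lead_coeff (h i) ^ s"] \<open>i0 \<in> J\<close>
      by (simp add: J_def)
    then have "d = 0" using \<open>i0 \<in> J\<close> by (simp add: J_def)
    then show ?thesis using le_d[OF assms(2)] by simp
  qed
qed

end

section \<open>Lagrange polynomials\<close>

text \<open>The Lagrange basis polynomial for the nodes \<open>0, \<dots>, N - 1\<close>, without normalisation.\<close>
definition lagrange_poly :: "nat \<Rightarrow> nat \<Rightarrow> 'a::comm_ring_1 poly" where
  "lagrange_poly N i = (\<Prod>m\<in>{..<N} - {i}. [:- of_nat m, 1:])"

lemma poly_lagrange_poly_eq_0: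
  "m < N \<Longrightarrow> m \<noteq> i \<Longrightarrow> poly (lagrange_poly N i) (of_nat m) = 0"
  unfolding lagrange_poly_def poly_prod by (rule prod_zero) auto

lemma
  assumes "i < N"
  shows degree_lagrange_poly: "degree (lagrange_poly N i :: 'a::idom poly) = N - 1"
    and lead_coeff_lagrange_poly: "lead_coeff (lagrange_poly N i :: 'a::idom poly) = 1"
proof -
  show "degree (lagrange_poly N i :: 'a::idom poly) = N - 1"
    unfolding lagrange_poly_def using assms by (subst degree_prod_sum_eq) auto
  show "lead_coeff (lagrange_poly N i :: 'a::idom poly) = 1"
    by (simp add: lagrange_poly_def lead_coeff_prod)
qed

lemma lagrange_poly_neq_0: "i < N \<Longrightarrow> (lagrange_poly N i :: 'a::idom poly) \<noteq> 0"
  using lead_coeff_lagrange_poly[of i N, where 'a='a] by auto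

lemma sum_power_lagrange_at_node:
  assumes "a < N" "p > 0"
  shows "(\<Sum>i<N. smult (poly (lagrange_poly N i) (of_nat a)) (lagrange_poly N i) ^ p) =
    smult (poly (lagrange_poly N a) (of_nat a)) (lagrange_poly N a :: 'a::comm_ring_1 poly) ^ p"
proof -
  have "smult (poly (lagrange_poly N i) (of_nat a)) (lagrange_poly N i :: 'a poly) ^ p = 0"
    if "i \<in> {..<N} - {a}" for i
    using that assms poly_lagrange_poly_eq_0[OF assms(1), of i, where 'a='a] by (simp add: power_0_left)
  then show ?thesis
    using assms(1) by (simp add: sum.remove[of "{..<N}" a])
qed

context
  assumes real: "real_ring TYPE('a::idom)"
begin

lemma poly_lagrange_poly_self_neq_0: "poly (lagrange_poly N i) (of_nat i :: 'a) \<noteq> 0"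
proof -
  have "poly [:- of_nat m, 1:] (of_nat i :: 'a) = of_nat i - of_nat m" for m
    by simp
  then show ?thesis
    by (simp add: lagrange_poly_def poly_prod real_ring_of_nat_eq_iff[OF real])
qed

lemma poly_pderiv_lagrange_poly_neq_0:
  assumes "a < N" "b < N" "a \<noteq> b"
  shows "poly (pderiv (lagrange_poly N b)) (of_nat a :: 'a) \<noteq> 0"
proof -
  define A where "A = {..<N} - {b}"
  define f where "f m = ([:- of_nat m, 1:] :: 'a poly)" for m
  have "a \<in> A" "finite A" using assms by (auto simp: A_def)
  have others_vanish: "poly (prod f (A - {m})) (of_nat a) = 0" if "m \<in> A - {a}" for m
    unfolding poly_prod using \<open>finite A\<close> \<open>a \<in> A\<close> that by (intro prod_zero) (auto simp: f_def)
  have "poly (pderiv (lagrange_poly N b)) (of_nat a) =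
      (\<Sum>m\<in>A. poly (prod f (A - {m})) (of_nat a) * poly (pderiv (f m)) (of_nat a))"
    by (simp add: lagrange_poly_def pderiv_prod poly_sum A_def f_def)
  also have "\<dots> = poly (prod f (A - {a})) (of_nat a) * poly (pderiv (f a)) (of_nat a)"
    using others_vanish by (simp add: sum.remove[OF \<open>finite A\<close> \<open>a \<in> A\<close>])
  also have "\<dots> = (\<Prod>m\<in>A - {a}. of_nat a - of_nat m)"
    by (simp add: f_def poly_prod pderiv_pCons)
  also have "\<dots> \<noteq> 0"
    by (auto simp: A_def real_ring_of_nat_eq_iff[OF real])
  finally show ?thesis .
qed

text \<open>A sum of \<open>2 s\<close>-th powers equal to a \<open>2 s\<close>-th power of a Lagrange polynomial:
  each summand has degree at most \<open>N - 1\<close> and vanishes at all nodes but \<open>a\<close>.\<close>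
lemma real_ring_sum_powers_eq_lagrange_power:
  fixes h :: "nat \<Rightarrow> 'a poly"
  assumes "s \<ge> 1" "a < N" "j < l"
    and sum_eq: "(\<Sum>i<l. h i ^ (2 * s)) = smult c (lagrange_poly N a) ^ (2 * s)"
  shows "h j = smult (coeff (h j) (N - 1)) (lagrange_poly N a)"
proof -
  have "2 * s * degree (h j) \<le> degree (smult c (lagrange_poly N a) ^ (2 * s))"
    using real_ring_degree_sum_even_powers[OF real assms(1,3), of h] by (simp add: sum_eq)
  also have "\<dots> \<le> 2 * s * degree (smult c (lagrange_poly N a))"
    using degree_power_le by (subst mult.commute)
  also have "\<dots> \<le> 2 * s * (N - 1)"
    using degree_smult_le[of c "lagrange_poly N a"] degree_lagrange_poly[OF assms(2), where 'a='a]
    by (intro mult_le_mono2) simp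
  finally have deg: "degree (h j) \<le> card ({..<N} - {a})"
    using assms(1,2) by simp
  have roots: "poly (h j) (of_nat m) = 0" if "m \<in> {..<N} - {a}" for m
  proof (rule real_ring_sum_even_powers_eq_0[OF real assms(1) _ _ assms(3)[folded lessThan_iff]])
    show "(\<Sum>i<l. poly (h i) (of_nat m) ^ (2 * s)) = 0"
      using arg_cong[OF sum_eq, of "\<lambda>q. poly q (of_nat m)"] that assms(1)
      by (simp add: poly_sum poly_power poly_lagrange_poly_eq_0)
  qed simp
  have "h j = smult (coeff (h j) (card ({..<N} - {a})))
      (\<Prod>m\<in>{..<N} - {a}. [:- of_nat m, 1:])"
  proof (rule poly_eq_smult_prod_of_roots[where f = of_nat])
    show "inj_on (of_nat :: nat \<Rightarrow> 'a) ({..<N} - {a})"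
      by (rule inj_onI) (simp add: real_ring_of_nat_eq_iff[OF real])
  qed (use deg roots in simp_all)
  then show ?thesis using assms(2) by (simp add: lagrange_poly_def)
qed

end

section \<open>The two-variable argument\<close>

lemma poly_pderiv_power:
  fixes G :: "'a::idom poly"
  assumes "n > 0"
  shows "poly (pderiv (G ^ n)) x = of_nat n * poly G x ^ (n - 1) * poly (pderiv G) x"
  using assms pderiv_power_Suc[of G "n - 1"] by (cases n) (simp_all add: poly_power)

interpretation eval_inner_hom: map_poly_idom_hom "\<lambda>c. poly c b" for b
  by unfold_locales

text \<open>For \<open>G :: 'a poly poly\<close> we write \<open>G(x, y)\<close>, with \<open>x\<close> the outer variable;
  \<open>poly G [:a:]\<close> is \<open>G(a, y)\<close> and \<open>map_poly (\<lambda>c. poly c b) G\<close> is \<open>G(x, b)\<close>.\<close>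

lemma poly_poly_const_eq:
  "poly (poly G [:a:]) b = poly (map_poly (\<lambda>c. poly c b) G) (a :: 'a::comm_semiring_1)"
  using poly_hom.poly_map_poly[of b G "[:a:]"] by simp

definition lagrange_xy :: "nat \<Rightarrow> nat \<Rightarrow> 'a::comm_ring_1 poly poly" where
  "lagrange_xy N i = smult (lagrange_poly N i) (map_poly (\<lambda>c. [:c:]) (lagrange_poly N i))"

lemma poly_lagrange_xy:
  "poly (lagrange_xy N i) [:a:] = smult (poly (lagrange_poly N i) a) (lagrange_poly N i)"
  using const_poly_hom.poly_map_poly[of "lagrange_poly N i" a] by (simp add: lagrange_xy_def)

lemma map_poly_eval_lagrange_xy:
  "map_poly (\<lambda>c. poly c b) (lagrange_xy N i) = smult (poly (lagrange_poly N i) b) (lagrange_poly N i)"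
  by (simp add: lagrange_xy_def poly_hom.map_poly_hom_smult map_poly_map_poly o_def)

lemma poly_pderiv_lagrange_xy:
  "poly (pderiv (lagrange_xy N i)) [:a:] =
    smult (poly (pderiv (lagrange_poly N i)) a) (lagrange_poly N i :: 'a::idom poly)"
  using const_poly_hom.poly_map_poly[of "pderiv (lagrange_poly N i)" a]
  by (simp add: lagrange_xy_def pderiv_smult flip: const_poly_hom.map_poly_pderiv)

lemma poly_pderiv_sum_power_lagrange_xy:
  assumes "a < N" "p > 1"
  shows "poly (pderiv (\<Sum>i<N. lagrange_xy N i ^ p)) [:of_nat a:] =
    of_nat p * lagrange_poly N a ^ (p - 1) *
      smult (poly (lagrange_poly N a) (of_nat a) ^ (p - 1) * poly (pderiv (lagrange_poly N a)) (of_nat a))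
        (lagrange_poly N a :: 'a::idom poly)"
proof -
  have vanish: "poly (pderiv (lagrange_xy N i ^ p)) [:of_nat a:] = (0 :: 'a poly)"
    if "i \<in> {..<N} - {a}" for i
  proof -
    have "poly (lagrange_xy N i :: 'a poly poly) [:of_nat a:] = 0"
      using that poly_lagrange_poly_eq_0[OF assms(1), of i, where 'a='a] by (simp add: poly_lagrange_xy)
    then show ?thesis
      using assms(2) by (simp add: poly_pderiv_power zero_power)
  qed
  have "poly (pderiv (\<Sum>i<N. lagrange_xy N i ^ p)) [:of_nat a:] =
      (\<Sum>i<N. poly (pderiv (lagrange_xy N i ^ p)) [:of_nat a:] :: 'a poly)"
    by (simp add: pderiv_sum poly_sum)
  also have "\<dots> = poly (pderiv (lagrange_xy N a ^ p)) [:of_nat a:]"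
    by (subst sum.remove[of _ a]) (use assms vanish in \<open>auto intro!: sum.neutral\<close>)
  also have "\<dots> = of_nat p * lagrange_poly N a ^ (p - 1) *
      smult (poly (lagrange_poly N a) (of_nat a) ^ (p - 1) * poly (pderiv (lagrange_poly N a)) (of_nat a))
        (lagrange_poly N a)"
    using assms(2)
    by (simp add: poly_pderiv_power poly_lagrange_xy poly_pderiv_lagrange_xy
        smult_power mult_smult_left mult_smult_right mult_ac)
  finally show ?thesis .
qed

locale lagrange_power_sum =
  fixes N l s :: nat and g :: "nat \<Rightarrow> 'a::idom poly poly"
  assumes real: "real_ring TYPE('a)"
    and s_ge_1: "s \<ge> 1"
    and sum_eq: "(\<Sum>j<l. g j ^ (2 * s)) = (\<Sum>i<N. lagrange_xy N i ^ (2 * s))"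
begin

definition lam :: "nat \<Rightarrow> 'a" where
  "lam a = poly (lagrange_poly N a) (of_nat a)"

definition c :: "nat \<Rightarrow> nat \<Rightarrow> 'a" where
  "c j a = coeff (poly (g j) [:of_nat a:]) (N - 1)"

definition e :: "nat \<Rightarrow> nat \<Rightarrow> 'a" where
  "e j b = coeff (map_poly (\<lambda>c. poly c (of_nat b)) (g j)) (N - 1)"

lemma lam_neq_0: "lam a \<noteq> 0"
  unfolding lam_def by (rule poly_lagrange_poly_self_neq_0[OF real])

lemma restrict_outer:
  assumes "a < N" "j < l"
  shows "poly (g j) [:of_nat a:] = smult (c j a) (lagrange_poly N a)"
  unfolding c_def
proof (rule real_ring_sum_powers_eq_lagrange_power[OF real s_ge_1 assms])
  show "(\<Sum>j<l. poly (g j) [:of_nat a:] ^ (2 * s)) = smult (lam a) (lagrange_poly N a) ^ (2 * s)"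
    using arg_cong[OF sum_eq, of "\<lambda>G. poly G [:of_nat a:]"] assms(1) s_ge_1
    by (simp add: poly_hom.hom_sum poly_hom.hom_power poly_lagrange_xy sum_power_lagrange_at_node lam_def)
qed

lemma restrict_inner:
  assumes "b < N" "j < l"
  shows "map_poly (\<lambda>c. poly c (of_nat b)) (g j) = smult (e j b) (lagrange_poly N b)"
  unfolding e_def
proof (rule real_ring_sum_powers_eq_lagrange_power[OF real s_ge_1 assms])
  show "(\<Sum>j<l. map_poly (\<lambda>c. poly c (of_nat b)) (g j) ^ (2 * s)) =
      smult (lam b) (lagrange_poly N b) ^ (2 * s)"
    using arg_cong[OF sum_eq, of "map_poly (\<lambda>c. poly c (of_nat b))"] assms(1) s_ge_1
    by (simp add: eval_inner_hom.hom_sum eval_inner_hom.hom_power map_poly_eval_lagrange_xy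
        sum_power_lagrange_at_node lam_def)
qed

lemma c_eq_e: "b < N \<Longrightarrow> j < l \<Longrightarrow> c j b = e j b"
  using poly_poly_const_eq[of "g j" "of_nat b" "of_nat b"] lam_neq_0[of b]
  by (simp add: restrict_outer restrict_inner flip: lam_def)

lemma diagonal:
  assumes "a < N"
  shows "(\<Sum>j<l. c j a ^ (2 * s - 1) * c j a) = lam a ^ (2 * s)"
proof -
  have "(\<Sum>j<l. (c j a * lam a) ^ (2 * s)) = (lam a * lam a) ^ (2 * s)"
    using arg_cong[OF sum_eq, of "\<lambda>G. poly (poly G [:of_nat a:]) (of_nat a)"] assms s_ge_1
    by (simp add: poly_hom.hom_sum poly_hom.hom_power poly_lagrange_xy restrict_outer
        sum_power_lagrange_at_node lam_def poly_sum poly_power)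
  then have "(\<Sum>j<l. c j a ^ (2 * s)) = lam a ^ (2 * s)"
    using lam_neq_0[of a] by (simp add: power_mult_distrib flip: sum_distrib_right)
  moreover have "c j a ^ (2 * s - 1) * c j a = c j a ^ (2 * s)" for j
    using s_ge_1 by (simp flip: power_Suc2)
  ultimately show ?thesis by simp
qed

lemma pderiv_restrict_outer:
  assumes "a < N"
  shows "(\<Sum>j<l. smult (c j a ^ (2 * s - 1)) (poly (pderiv (g j)) [:of_nat a:])) =
    smult (lam a ^ (2 * s - 1) * poly (pderiv (lagrange_poly N a)) (of_nat a)) (lagrange_poly N a)"
proof -
  let ?L = "lagrange_poly N a :: 'a poly"
  let ?k = "of_nat (2 * s) * ?L ^ (2 * s - 1)"
  have lhs: "poly (pderiv (\<Sum>j<l. g j ^ (2 * s))) [:of_nat a:] =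
      ?k * (\<Sum>j<l. smult (c j a ^ (2 * s - 1)) (poly (pderiv (g j)) [:of_nat a:]))"
    using assms s_ge_1
    by (simp add: pderiv_sum poly_sum poly_pderiv_power restrict_outer sum_distrib_left
        smult_power mult_smult_left mult_smult_right mult.assoc)
  have rhs: "poly (pderiv (\<Sum>i<N. lagrange_xy N i ^ (2 * s))) [:of_nat a:] =
      ?k * smult (lam a ^ (2 * s - 1) * poly (pderiv ?L) (of_nat a)) ?L"
    using poly_pderiv_sum_power_lagrange_xy[OF assms, of "2 * s"] s_ge_1 by (simp add: lam_def)
  have "?k \<noteq> 0"
    using real_ring_of_nat_neq_0[OF real, of "2 * s"] s_ge_1 lagrange_poly_neq_0[OF assms, where 'a='a]
    by (simp add: of_nat_poly)
  moreover have "?k * (\<Sum>j<l. smult (c j a ^ (2 * s - 1)) (poly (pderiv (g j)) [:of_nat a:])) =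
      ?k * smult (lam a ^ (2 * s - 1) * poly (pderiv ?L) (of_nat a)) ?L"
    by (metis lhs rhs sum_eq)
  ultimately show ?thesis
    using mult_left_cancel by blast
qed

lemma poly_pderiv_restrict_at_node:
  assumes "b < N" "j < l"
  shows "poly (poly (pderiv (g j)) [:of_nat a:]) (of_nat b) =
    c j b * poly (pderiv (lagrange_poly N b)) (of_nat a)"
  using assms
  by (simp add: poly_poly_const_eq poly_hom.map_poly_pderiv restrict_inner pderiv_smult c_eq_e)

lemma orthogonal:
  assumes "a < N" "b < N" "a \<noteq> b"
  shows "(\<Sum>j<l. c j a ^ (2 * s - 1) * c j b) = 0"
proof -
  have "(\<Sum>j<l. c j a ^ (2 * s - 1) * c j b) * poly (pderiv (lagrange_poly N b)) (of_nat a) = 0"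
    using arg_cong[OF pderiv_restrict_outer[OF assms(1)], of "\<lambda>q. poly q (of_nat b)"]
      poly_lagrange_poly_eq_0[OF assms(2), of a, where 'a='a] assms
    by (simp add: poly_sum poly_pderiv_restrict_at_node sum_distrib_right mult.assoc)
  then show ?thesis
    using poly_pderiv_lagrange_poly_neq_0[OF real assms] by simp
qed

theorem card_le: "N \<le> l"
proof (rule biorthogonal_card_le[where v = "\<lambda>j a. c j a ^ (2 * s - 1)" and w = c
      and \<mu> = "\<lambda>a. lam a ^ (2 * s)"])
  fix a b assume "a < N" "b < N"
  then show "(\<Sum>j<l. c j a ^ (2 * s - 1) * c j b) = (if a = b then lam a ^ (2 * s) else 0)"
    using orthogonal[of a b] diagonal[of a] by auto
qed (use lam_neq_0 in simp)

end

section \<open>Sums of squares and ideals\<close>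

inductive_set sos :: "'a::comm_ring_1 set" where
  sos_0: "0 \<in> sos"
| sos_add_square: "a \<in> sos \<Longrightarrow> a + x ^ 2 \<in> sos"

lemma square_in_sos: "x ^ 2 \<in> sos"
  using sos_add_square[OF sos_0] by simp

lemma sos_add:
  assumes "a \<in> sos" "b \<in> sos"
  shows "a + b \<in> sos"
  using assms(2) by (induction b rule: sos.induct) (simp_all add: assms(1) sos_add_square flip: add.assoc)

lemma sos_mult_square: "a \<in> sos \<Longrightarrow> a * y ^ 2 \<in> sos"
proof (induction a rule: sos.induct)
  case (sos_add_square a x)
  have "(a + x ^ 2) * y ^ 2 = a * y ^ 2 + (x * y) ^ 2"
    by (simp add: algebra_simps power_mult_distrib)
  then show ?case using sos.sos_add_square[OF sos_add_square.IH] by simp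
qed (simp add: sos_0)

lemma sos_mult:
  assumes "a \<in> sos" "b \<in> sos"
  shows "a * b \<in> sos"
  using assms(2) by (induction b rule: sos.induct) (simp_all add: assms(1) sos_0 distrib_left sos_add sos_mult_square)

lemma sum_squares_in_sos: "(\<Sum>i\<in>A. f i ^ 2) \<in> sos"
  by (induction A rule: infinite_finite_induct) (simp_all add: sos_0 sos_add square_in_sos)

lemma sum_of_powers_2_iff_sos: "sum_of_powers UNIV 2 y \<longleftrightarrow> y \<in> sos"
proof
  assume "sum_of_powers UNIV 2 y"
  then show "y \<in> sos"
    unfolding sum_of_powers_def sum_of_powers_len_def by (auto simp: sum_squares_in_sos)
next
  assume "y \<in> sos"
  then show "sum_of_powers UNIV 2 y"
  proof (induction y rule: sos.induct)
    case sos_0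
    show ?case unfolding sum_of_powers_def sum_of_powers_len_def by (rule exI[of _ 0]) simp
  next
    case (sos_add_square a x)
    then obtain k :: nat and f where "a = (\<Sum>i<k. f i ^ 2)"
      unfolding sum_of_powers_def sum_of_powers_len_def by blast
    then have "a + x ^ 2 = (\<Sum>i<Suc k. (f(k := x)) i ^ 2)" by simp
    then show ?case unfolding sum_of_powers_def sum_of_powers_len_def by blast
  qed
qed

definition is_ideal :: "'a::comm_ring_1 set \<Rightarrow> bool" where
  "is_ideal I \<longleftrightarrow> 0 \<in> I \<and> (\<forall>x\<in>I. \<forall>y\<in>I. x + y \<in> I) \<and> (\<forall>x\<in>I. \<forall>r. r * x \<in> I)"

lemma
  assumes "is_ideal I"
  shows ideal_0: "0 \<in> I"
    and ideal_add: "x \<in> I \<Longrightarrow> y \<in> I \<Longrightarrow> x + y \<in> I"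
    and ideal_mult_left: "x \<in> I \<Longrightarrow> r * x \<in> I"
    and ideal_mult_right: "x \<in> I \<Longrightarrow> x * r \<in> I"
    and ideal_uminus: "x \<in> I \<Longrightarrow> - x \<in> I"
    and ideal_diff: "x \<in> I \<Longrightarrow> y \<in> I \<Longrightarrow> x - y \<in> I"
proof -
  show "0 \<in> I" and add: "x \<in> I \<Longrightarrow> y \<in> I \<Longrightarrow> x + y \<in> I"
    and mult: "x \<in> I \<Longrightarrow> r * x \<in> I" for x y r
    using assms by (simp_all add: is_ideal_def)
  show "x \<in> I \<Longrightarrow> x * r \<in> I" using mult[of x r] by (simp add: mult.commute)
  show uminus: "x \<in> I \<Longrightarrow> - x \<in> I" for x using mult[of x "- 1"] by simp
  show "x \<in> I \<Longrightarrow> y \<in> I \<Longrightarrow> x - y \<in> I"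
    using add[OF _ uminus[of y]] by (simp only: diff_conv_add_uminus)
qed

definition maximal_ideal_avoiding :: "'a::comm_ring_1 set \<Rightarrow> 'a set \<Rightarrow> bool" where
  "maximal_ideal_avoiding T P \<longleftrightarrow> is_ideal P \<and> P \<inter> T = {} \<and>
     (\<forall>I. is_ideal I \<longrightarrow> I \<inter> T = {} \<longrightarrow> P \<subseteq> I \<longrightarrow> I = P)"

lemma is_ideal_Union_chain:
  assumes "C \<noteq> {}" "\<And>I. I \<in> C \<Longrightarrow> is_ideal I"
    and chain: "\<And>I J. I \<in> C \<Longrightarrow> J \<in> C \<Longrightarrow> I \<subseteq> J \<or> J \<subseteq> I"
  shows "is_ideal (\<Union>C)"
  unfolding is_ideal_def
proof (intro conjI ballI allI)
  obtain K where "K \<in> C" using assms(1) by blast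
  then show "0 \<in> \<Union>C" using ideal_0[OF assms(2)] by blast
next
  fix x y assume "x \<in> \<Union>C" "y \<in> \<Union>C"
  then obtain I J where IJ: "I \<in> C" "J \<in> C" "x \<in> I" "y \<in> J" by blast
  show "x + y \<in> \<Union>C"
  proof (cases "I \<subseteq> J")
    case True
    then show ?thesis using IJ ideal_add[OF assms(2)[OF \<open>J \<in> C\<close>], of x y] by blast
  next
    case False
    then have "J \<subseteq> I" using chain[OF IJ(1,2)] by blast
    then show ?thesis using IJ ideal_add[OF assms(2)[OF \<open>I \<in> C\<close>], of x y] by blast
  qed
next
  fix x r assume "x \<in> \<Union>C"
  then obtain K where "K \<in> C" "x \<in> K" by blast
  then show "r * x \<in> \<Union>C" using ideal_mult_left[OF assms(2)[OF \<open>K \<in> C\<close>], of x r] by blast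
qed

lemma ex_maximal_ideal_avoiding:
  assumes "0 \<notin> T"
  shows "\<exists>P. maximal_ideal_avoiding T P"
proof -
  let ?A = "{I. is_ideal I \<and> I \<inter> T = {}}"
  have "\<exists>P\<in>?A. \<forall>I\<in>?A. P \<subseteq> I \<longrightarrow> I = P"
  proof (rule Zorn_Lemma2, intro ballI)
    fix C assume C: "C \<in> chains ?A"
    show "\<exists>U\<in>?A. \<forall>I\<in>C. I \<subseteq> U"
    proof (cases "C = {}")
      case True
      have "{0} \<in> ?A" using assms by (auto simp: is_ideal_def)
      then show ?thesis using True by blast
    next
      case False
      have CA: "C \<subseteq> ?A" and chain: "\<And>I J. I \<in> C \<Longrightarrow> J \<in> C \<Longrightarrow> I \<subseteq> J \<or> J \<subseteq> I"
        using C by (auto simp: chains_def chain_subset_def)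
      have "is_ideal (\<Union>C)"
        using CA by (intro is_ideal_Union_chain[OF False _ chain]) blast
      moreover have "\<Union>C \<inter> T = {}" using CA by blast
      ultimately show ?thesis by blast
    qed
  qed
  then obtain P where "is_ideal P" "P \<inter> T = {}" "\<forall>I\<in>?A. P \<subseteq> I \<longrightarrow> I = P"
    by blast
  then show ?thesis unfolding maximal_ideal_avoiding_def by (intro exI[of _ P]) simp
qed

lemma is_ideal_add_multiples:
  assumes ideal: "is_ideal P"
  shows "is_ideal {m + a * r | m r. m \<in> P}"
  unfolding is_ideal_def
proof (intro conjI ballI allI)
  have "0 = 0 + a * 0" by simp
  then show "0 \<in> {m + a * r | m r. m \<in> P}" using ideal_0[OF ideal] by blast
next
  fix x y assume "x \<in> {m + a * r | m r. m \<in> P}" "y \<in> {m + a * r | m r. m \<in> P}"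
  then obtain m1 r1 m2 r2 where "x = m1 + a * r1" "y = m2 + a * r2" "m1 \<in> P" "m2 \<in> P"
    by blast
  moreover have "x + y = (m1 + m2) + a * (r1 + r2)"
    using calculation by (simp add: algebra_simps)
  ultimately show "x + y \<in> {m + a * r | m r. m \<in> P}"
    using ideal_add[OF ideal, of m1 m2] by blast
next
  fix x r assume "x \<in> {m + a * r | m r. m \<in> P}"
  then obtain m1 r1 where "x = m1 + a * r1" "m1 \<in> P"
    by blast
  moreover have "r * x = r * m1 + a * (r * r1)"
    using calculation by (simp add: algebra_simps)
  ultimately show "r * x \<in> {m + a * r | m r. m \<in> P}"
    using ideal_mult_left[OF ideal, of m1 r] by blast
qed

context
  fixes T P :: "'a::comm_ring_1 set"
  assumes max: "maximal_ideal_avoiding T P"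
begin

lemma maximal_ideal_avoidingD:
  "is_ideal P" "P \<inter> T = {}"
  using max by (simp_all add: maximal_ideal_avoiding_def)

lemma maximal_ideal_avoiding_extend:
  assumes "a \<notin> P"
  obtains t m r where "t \<in> T" "m \<in> P" "t = m + a * r"
proof -
  define I where "I = {m + a * r | m r. m \<in> P}"
  have ideal: "is_ideal P" by (rule maximal_ideal_avoidingD)
  have "P \<subseteq> I"
  proof
    fix x assume "x \<in> P"
    moreover have "x = x + a * 0" by simp
    ultimately show "x \<in> I" unfolding I_def by blast
  qed
  moreover have "a \<in> I"
  proof -
    have "a = 0 + a * 1" by simp
    then show ?thesis unfolding I_def using ideal_0[OF ideal] by blast
  qed
  ultimately have "I \<inter> T \<noteq> {}"
    using max assms is_ideal_add_multiples[OF ideal, of a]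
    unfolding maximal_ideal_avoiding_def I_def by blast
  then show ?thesis using that unfolding I_def by blast
qed

lemma maximal_ideal_avoiding_prime:
  assumes mult_closed: "\<And>t u. t \<in> T \<Longrightarrow> u \<in> T \<Longrightarrow> t * u \<in> T"
    and "a * b \<in> P"
  shows "a \<in> P \<or> b \<in> P"
proof (rule ccontr)
  assume "\<not> (a \<in> P \<or> b \<in> P)"
  then have "a \<notin> P" "b \<notin> P" by simp_all
  obtain t1 m1 r1 where "t1 \<in> T" "m1 \<in> P" "t1 = m1 + a * r1"
    by (rule maximal_ideal_avoiding_extend[OF \<open>a \<notin> P\<close>])
  obtain t2 m2 r2 where "t2 \<in> T" "m2 \<in> P" "t2 = m2 + b * r2"
    by (rule maximal_ideal_avoiding_extend[OF \<open>b \<notin> P\<close>])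
  have ideal: "is_ideal P" by (rule maximal_ideal_avoidingD)
  have "t1 * t2 = m1 * t2 + m2 * (a * r1) + (a * b) * (r1 * r2)"
    by (simp add: \<open>t1 = _\<close> \<open>t2 = _\<close> algebra_simps)
  also have "\<dots> \<in> P"
    using ideal_add[OF ideal ideal_add[OF ideal ideal_mult_right[OF ideal \<open>m1 \<in> P\<close>]
        ideal_mult_right[OF ideal \<open>m2 \<in> P\<close>]] ideal_mult_right[OF ideal assms(2)]] .
  finally show False
    using mult_closed[OF \<open>t1 \<in> T\<close> \<open>t2 \<in> T\<close>] maximal_ideal_avoidingD(2) by blast
qed

text \<open>Avoiding \<open>1 + \<Sigma>A\<^sup>2\<close> makes the quotient real.\<close>
lemma maximal_ideal_avoiding_real:
  assumes T_def: "T = (+) 1 ` sos" and "b ^ 2 + a \<in> P" "a \<in> sos"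
  shows "b \<in> P"
proof (rule ccontr)
  assume "b \<notin> P"
  then obtain t m r where "t \<in> T" "m \<in> P" "t = m + b * r"
    by (rule maximal_ideal_avoiding_extend)
  then obtain \<sigma> where "\<sigma> \<in> sos" "1 + \<sigma> = m + b * r"
    unfolding T_def by auto
  have ideal: "is_ideal P" by (rule maximal_ideal_avoidingD)
  have "1 + (\<sigma> + \<sigma> + \<sigma> * \<sigma> + a * r ^ 2) = (1 + \<sigma>) ^ 2 + a * r ^ 2"
    by (simp add: algebra_simps power2_eq_square)
  also have "\<dots> = m * (m + 2 * b * r) + (b ^ 2 + a) * r ^ 2"
    unfolding \<open>1 + \<sigma> = _\<close> by (simp add: algebra_simps power2_eq_square)
  also have "\<dots> \<in> P"
    using ideal_add[OF ideal ideal_mult_right[OF ideal \<open>m \<in> P\<close>] ideal_mult_right[OF ideal assms(2)]] .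
  finally have "1 + (\<sigma> + \<sigma> + \<sigma> * \<sigma> + a * r ^ 2) \<in> P" .
  moreover have "\<sigma> + \<sigma> + \<sigma> * \<sigma> + a * r ^ 2 \<in> sos"
    using sos_add[OF sos_add[OF sos_add[OF \<open>\<sigma> \<in> sos\<close> \<open>\<sigma> \<in> sos\<close>]
        sos_mult[OF \<open>\<sigma> \<in> sos\<close> \<open>\<sigma> \<in> sos\<close>]] sos_mult_square[OF \<open>a \<in> sos\<close>]] .
  then have "1 + (\<sigma> + \<sigma> + \<sigma> * \<sigma> + a * r ^ 2) \<in> T"
    unfolding T_def by (rule imageI)
  ultimately show False
    using maximal_ideal_avoidingD(2) by blast
qed

end

section \<open>The real quotient\<close>

text \<open>If \<open>-1\<close> is a sum of squares then \<open>1 + \<Sigma>A\<^sup>2\<close> contains \<open>0\<close>; avoiding \<open>{1}\<close>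
  instead keeps the quotient below a nontrivial ring in every case.\<close>
definition one_plus_sos :: "'a::comm_ring_1 set" where
  "one_plus_sos = (if (-1 :: 'a) \<in> sos then {1} else (+) 1 ` sos)"

lemma zero_notin_one_plus_sos: "(0 :: 'a::comm_ring_1) \<notin> one_plus_sos"
proof
  assume "(0 :: 'a) \<in> one_plus_sos"
  then have "(-1 :: 'a) \<notin> sos" "0 \<in> (+) 1 ` (sos :: 'a set)"
    by (auto simp: one_plus_sos_def split: if_splits)
  moreover obtain \<sigma> :: 'a where "\<sigma> \<in> sos" "1 + \<sigma> = 0"
    using calculation(2) by auto
  moreover from \<open>1 + \<sigma> = 0\<close> have "\<sigma> = -1" by (simp add: eq_neg_iff_add_eq_0 add.commute)
  ultimately show False by simp
qed

lemma one_in_one_plus_sos: "(1 :: 'a::comm_ring_1) \<in> one_plus_sos"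
  using imageI[OF sos_0, of "(+) (1 :: 'a)"] by (simp add: one_plus_sos_def)

lemma one_plus_sos_mult_closed:
  fixes t u :: "'a::comm_ring_1"
  shows "t \<in> one_plus_sos \<Longrightarrow> u \<in> one_plus_sos \<Longrightarrow> t * u \<in> one_plus_sos"
proof (cases "(-1 :: 'a) \<in> sos")
  case False
  assume "t \<in> one_plus_sos" "u \<in> one_plus_sos"
  then obtain \<sigma> \<tau> where "\<sigma> \<in> sos" "\<tau> \<in> sos" "t = 1 + \<sigma>" "u = 1 + \<tau>"
    using False by (auto simp: one_plus_sos_def)
  moreover have "(1 + \<sigma>) * (1 + \<tau>) = 1 + (\<sigma> + \<tau> + \<sigma> * \<tau>)"
    by (simp add: algebra_simps)
  moreover have "\<sigma> + \<tau> + \<sigma> * \<tau> \<in> sos"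
    using calculation by (intro sos_add sos_mult) simp_all
  ultimately show ?thesis
    using False by (simp add: one_plus_sos_def)
qed (simp add: one_plus_sos_def)

definition real_prime :: "'a::comm_ring_1 set" where
  "real_prime = (SOME P. maximal_ideal_avoiding one_plus_sos P)"

lemma maximal_ideal_avoiding_real_prime: "maximal_ideal_avoiding one_plus_sos real_prime"
  unfolding real_prime_def
  by (rule someI_ex[OF ex_maximal_ideal_avoiding[OF zero_notin_one_plus_sos]])

lemmas real_prime_ideal = maximal_ideal_avoidingD(1)[OF maximal_ideal_avoiding_real_prime]

lemma one_notin_real_prime: "1 \<notin> real_prime"
  using maximal_ideal_avoidingD(2)[OF maximal_ideal_avoiding_real_prime] one_in_one_plus_sos
  by blast

lemma real_prime_equivp: "equivp (\<lambda>x y :: 'a::comm_ring_1. x - y \<in> real_prime)"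
proof (rule equivpI)
  show "reflp (\<lambda>x y :: 'a. x - y \<in> real_prime)"
    by (simp add: reflp_def ideal_0[OF real_prime_ideal])
  show "symp (\<lambda>x y :: 'a. x - y \<in> real_prime)"
    unfolding symp_def using ideal_uminus[OF real_prime_ideal] by force
  show "transp (\<lambda>x y :: 'a. x - y \<in> real_prime)"
  proof (rule transpI)
    fix x y z :: 'a assume "x - y \<in> real_prime" "y - z \<in> real_prime"
    then have "(x - y) + (y - z) \<in> real_prime" by (rule ideal_add[OF real_prime_ideal])
    then show "x - z \<in> real_prime" by simp
  qed
qed

quotient_type (overloaded) 'a real_quot = "'a::comm_ring_1" / "\<lambda>x y. x - y \<in> real_prime"
  morphisms rep_real_quot abs_real_quot
  by (rule real_prime_equivp)

instantiation real_quot :: (comm_ring_1) comm_ring_1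
begin

lift_definition zero_real_quot :: "'a real_quot" is 0 .

lift_definition one_real_quot :: "'a real_quot" is 1 .

lift_definition plus_real_quot :: "'a real_quot \<Rightarrow> 'a real_quot \<Rightarrow> 'a real_quot" is "(+)"
proof -
  fix x1 y1 x2 y2 :: 'a
  assume "x1 - y1 \<in> real_prime" "x2 - y2 \<in> real_prime"
  then have "(x1 - y1) + (x2 - y2) \<in> real_prime" by (rule ideal_add[OF real_prime_ideal])
  then show "x1 + x2 - (y1 + y2) \<in> real_prime" by (simp add: algebra_simps)
qed

lift_definition uminus_real_quot :: "'a real_quot \<Rightarrow> 'a real_quot" is uminus
proof -
  fix x y :: 'a
  assume "x - y \<in> real_prime"
  then have "- (x - y) \<in> real_prime" by (rule ideal_uminus[OF real_prime_ideal])
  then show "- x - - y \<in> real_prime" by (simp add: algebra_simps)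
qed

lift_definition minus_real_quot :: "'a real_quot \<Rightarrow> 'a real_quot \<Rightarrow> 'a real_quot" is "(-)"
proof -
  fix x1 y1 x2 y2 :: 'a
  assume "x1 - y1 \<in> real_prime" "x2 - y2 \<in> real_prime"
  then have "(x1 - y1) - (x2 - y2) \<in> real_prime" by (rule ideal_diff[OF real_prime_ideal])
  then show "x1 - x2 - (y1 - y2) \<in> real_prime" by (simp add: algebra_simps)
qed

lift_definition times_real_quot :: "'a real_quot \<Rightarrow> 'a real_quot \<Rightarrow> 'a real_quot" is "(*)"
proof -
  fix x1 y1 x2 y2 :: 'a
  assume "x1 - y1 \<in> real_prime" "x2 - y2 \<in> real_prime"
  then have "x1 * (x2 - y2) + (x1 - y1) * y2 \<in> real_prime"
    by (intro ideal_add[OF real_prime_ideal] ideal_mult_left[OF real_prime_ideal]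
        ideal_mult_right[OF real_prime_ideal])
  then show "x1 * x2 - y1 * y2 \<in> real_prime" by (simp add: algebra_simps)
qed

instance
proof
  fix a b c :: "'a real_quot"
  show "a + b + c = a + (b + c)" by transfer (simp add: ideal_0[OF real_prime_ideal] algebra_simps)
  show "a + b = b + a" by transfer (simp add: ideal_0[OF real_prime_ideal] algebra_simps)
  show "0 + a = a" by transfer (simp add: ideal_0[OF real_prime_ideal])
  show "- a + a = 0" by transfer (simp add: ideal_0[OF real_prime_ideal])
  show "a - b = a + - b" by transfer (simp add: ideal_0[OF real_prime_ideal])
  show "a * b * c = a * (b * c)" by transfer (simp add: ideal_0[OF real_prime_ideal] algebra_simps)
  show "a * b = b * a" by transfer (simp add: ideal_0[OF real_prime_ideal] algebra_simps)
  show "1 * a = a" by transfer (simp add: ideal_0[OF real_prime_ideal])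
  show "(a + b) * c = a * c + b * c"
    by transfer (simp add: ideal_0[OF real_prime_ideal] algebra_simps)
  show "(0 :: 'a real_quot) \<noteq> 1"
    by transfer (use ideal_uminus[OF real_prime_ideal] one_notin_real_prime in force)
qed

end

instance real_quot :: (comm_ring_1) idom
proof
  fix a b :: "'a real_quot"
  show "a \<noteq> 0 \<Longrightarrow> b \<noteq> 0 \<Longrightarrow> a * b \<noteq> 0"
    by transfer (use maximal_ideal_avoiding_prime[OF maximal_ideal_avoiding_real_prime
          one_plus_sos_mult_closed] in auto)
qed

interpretation abs_real_quot_hom: comm_ring_hom abs_real_quot
  by unfold_locales
    (simp_all add: zero_real_quot.abs_eq one_real_quot.abs_eq plus_real_quot.abs_eq times_real_quot.abs_eq)

lemma abs_real_quot_eq_0_iff: "abs_real_quot x = 0 \<longleftrightarrow> x \<in> real_prime"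
  by (metis zero_real_quot.abs_eq real_quot.abs_eq_iff diff_zero)

lemma real_ring_real_quot:
  assumes "(-1 :: 'a::comm_ring_1) \<notin> sos"
  shows "real_ring TYPE('a real_quot)"
  unfolding real_ring_def
proof (intro allI impI ballI)
  fix x :: "nat \<Rightarrow> 'a real_quot" and A i
  assume "finite A" "(\<Sum>i\<in>A. x i ^ 2) = 0" "i \<in> A"
  define r where "r j = rep_real_quot (x j)" for j
  have x_r: "x j = abs_real_quot (r j)" for j
    unfolding r_def by (simp add: Quotient_abs_rep[OF Quotient_real_quot])
  have "(\<Sum>j\<in>A. r j ^ 2) \<in> real_prime"
    using \<open>(\<Sum>i\<in>A. x i ^ 2) = 0\<close>
    by (simp add: x_r abs_real_quot_eq_0_iff flip: abs_real_quot_hom.hom_power abs_real_quot_hom.hom_sum)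
  then have "r i ^ 2 + (\<Sum>j\<in>A - {i}. r j ^ 2) \<in> real_prime"
    using \<open>finite A\<close> \<open>i \<in> A\<close> by (simp add: sum.remove)
  moreover have "one_plus_sos = (+) (1 :: 'a) ` sos"
    using assms by (simp add: one_plus_sos_def)
  ultimately have "r i \<in> real_prime"
    using maximal_ideal_avoiding_real[OF maximal_ideal_avoiding_real_prime _ _ sum_squares_in_sos]
    by blast
  then show "x i = 0" by (simp add: x_r abs_real_quot_eq_0_iff)
qed

section \<open>Polynomials as finitely supported maps\<close>

definition monomial_eval :: "('v \<Rightarrow> 'b::comm_semiring_1) \<Rightarrow> ('v \<Rightarrow>\<^sub>0 nat) \<Rightarrow> 'b" where
  "monomial_eval v m = (\<Prod>i. v i ^ Poly_Mapping.lookup m i)"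

definition pm_eval ::
  "('a::zero \<Rightarrow> 'b::comm_semiring_1) \<Rightarrow> ('v \<Rightarrow> 'b) \<Rightarrow> (('v \<Rightarrow>\<^sub>0 nat) \<Rightarrow>\<^sub>0 'a) \<Rightarrow> 'b" where
  "pm_eval c v p = (\<Sum>m\<in>Poly_Mapping.keys p. c (Poly_Mapping.lookup p m) * monomial_eval v m)"

lemma monomial_eval_0 [simp]: "monomial_eval v 0 = 1"
  by (simp add: monomial_eval_def)

lemma monomial_eval_add: "monomial_eval v (a + b) = monomial_eval v a * monomial_eval v b"
proof -
  have "{i. v i ^ Poly_Mapping.lookup m i \<noteq> 1} \<subseteq> Poly_Mapping.keys m" for m
    by (auto simp: in_keys_iff intro: ccontr)
  then have "finite {i. v i ^ Poly_Mapping.lookup m i \<noteq> 1}" for m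
    by (rule finite_subset) simp
  then show ?thesis
    by (simp add: monomial_eval_def lookup_add power_add Prod_any.distrib)
qed

lemma monomial_eval_single [simp]: "monomial_eval v (Poly_Mapping.single i k) = v i ^ k"
proof -
  have "(\<lambda>j. v j ^ Poly_Mapping.lookup (Poly_Mapping.single i k) j) = (\<lambda>j. if j = i then v j ^ k else 1)"
    by (auto simp: lookup_single when_def)
  then show ?thesis by (simp only: monomial_eval_def Prod_any.delta)
qed

lemma poly_mapping_sum_single_keys:
  "p = (\<Sum>m\<in>Poly_Mapping.keys p. Poly_Mapping.single m (Poly_Mapping.lookup p m))"
  by (rule poly_mapping_eqI) (simp add: lookup_sum lookup_single when_def in_keys_iff)

definition var_pm :: "nat \<Rightarrow> 'a::comm_ring_1 mpoly_pm" where
  "var_pm i = Poly_Mapping.single (Poly_Mapping.single i 1) 1"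

context
  fixes c :: "'a::comm_ring_1 \<Rightarrow> 'b::comm_ring_1"
  assumes c: "comm_ring_hom c"
begin

interpretation c: comm_ring_hom c by (fact c)

lemma pm_eval_0 [simp]: "pm_eval c v 0 = 0"
  by (simp add: pm_eval_def)

lemma pm_eval_single [simp]:
  "pm_eval c v (Poly_Mapping.single m a) = c a * monomial_eval v m"
  by (simp add: pm_eval_def)

lemma pm_eval_add: "pm_eval c v (p + q) = pm_eval c v p + pm_eval c v q"
  unfolding pm_eval_def
  by (rule setsum_keys_plus_distrib) (simp_all add: c.hom_add distrib_right)

lemma pm_eval_sum: "pm_eval c v (sum f A) = (\<Sum>a\<in>A. pm_eval c v (f a))"
  by (induction A rule: infinite_finite_induct) (simp_all add: pm_eval_add)

lemma pm_eval_mult: "pm_eval c v (p * q) = pm_eval c v p * pm_eval c v q"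
proof -
  let ?P = "Poly_Mapping.keys p" and ?Q = "Poly_Mapping.keys q"
  let ?p = "Poly_Mapping.lookup p" and ?q = "Poly_Mapping.lookup q"
  have "p * q = (\<Sum>a\<in>?P. Poly_Mapping.single a (?p a)) * (\<Sum>b\<in>?Q. Poly_Mapping.single b (?q b))"
    by (simp flip: poly_mapping_sum_single_keys)
  also have "\<dots> = (\<Sum>a\<in>?P. \<Sum>b\<in>?Q. Poly_Mapping.single (a + b) (?p a * ?q b))"
    by (simp add: sum_product mult_single)
  finally have "pm_eval c v (p * q) =
      (\<Sum>a\<in>?P. \<Sum>b\<in>?Q. c (?p a) * monomial_eval v a * (c (?q b) * monomial_eval v b))"
    by (simp add: pm_eval_sum c.hom_mult monomial_eval_add mult_ac)
  also have "\<dots> = pm_eval c v p * pm_eval c v q"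
    by (simp add: pm_eval_def sum_product)
  finally show ?thesis .
qed

lemma pm_eval_var_pm [simp]: "pm_eval c v (var_pm i) = v i"
  by (simp add: var_pm_def)

lemma comm_ring_hom_pm_eval: "comm_ring_hom (pm_eval c v)"
proof
  show "pm_eval c v 1 = 1"
    by (simp add: pm_eval_def)
qed (simp_all add: pm_eval_add pm_eval_mult)

end

lemma poly_ring_n_add: "p \<in> poly_ring_n n \<Longrightarrow> q \<in> poly_ring_n n \<Longrightarrow> p + q \<in> poly_ring_n n"
  unfolding poly_ring_n_def using keys_add[of p q] by blast

lemma poly_ring_n_diff: "p \<in> poly_ring_n n \<Longrightarrow> q \<in> poly_ring_n n \<Longrightarrow> p - q \<in> poly_ring_n n"
  unfolding poly_ring_n_def using keys_diff[of p q] by blast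

lemma poly_ring_n_mult:
  assumes "p \<in> poly_ring_n n" "q \<in> poly_ring_n n"
  shows "p * q \<in> poly_ring_n n"
  unfolding poly_ring_n_def
proof (rule CollectI, rule ballI)
  fix mon assume "mon \<in> Poly_Mapping.keys (p * q)"
  then obtain a b where "mon = a + b" "a \<in> Poly_Mapping.keys p" "b \<in> Poly_Mapping.keys q"
    using keys_mult[of p q] by blast
  then show "Poly_Mapping.keys mon \<subseteq> {..<n}"
    using assms keys_add[of a b] unfolding poly_ring_n_def by blast
qed

lemma poly_ring_n_of_nat: "(of_nat k :: 'a::comm_ring_1 mpoly_pm) \<in> poly_ring_n n"
proof -
  have "Poly_Mapping.keys (of_nat k :: 'a::comm_ring_1 mpoly_pm) \<subseteq> {0}"
    by (auto simp: in_keys_iff lookup_of_nat when_def split: if_splits)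
  then show ?thesis unfolding poly_ring_n_def by auto
qed

lemma poly_ring_n_0: "0 \<in> poly_ring_n n"
  using poly_ring_n_of_nat[of 0 n] by simp

lemma poly_ring_n_1: "1 \<in> poly_ring_n n"
  using poly_ring_n_of_nat[of 1 n] by simp

lemma poly_ring_n_var_pm: "i < n \<Longrightarrow> var_pm i \<in> poly_ring_n n"
  unfolding poly_ring_n_def var_pm_def by auto

lemma poly_ring_n_prod:
  assumes "\<And>a. a \<in> A \<Longrightarrow> f a \<in> poly_ring_n n"
  shows "prod f A \<in> poly_ring_n n"
  using assms
  by (induction A rule: infinite_finite_induct) (simp_all add: poly_ring_n_mult poly_ring_n_1)

lemma poly_ring_n_sum:
  assumes "\<And>a. a \<in> A \<Longrightarrow> f a \<in> poly_ring_n n"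
  shows "sum f A \<in> poly_ring_n n"
  using assms
  by (induction A rule: infinite_finite_induct) (simp_all add: poly_ring_n_add poly_ring_n_0)

lemma poly_ring_n_power: "p \<in> poly_ring_n n \<Longrightarrow> p ^ k \<in> poly_ring_n n"
  using poly_ring_n_prod[of "{..<k}" "\<lambda>_. p"] by simp

definition lagrange_pm :: "nat \<Rightarrow> nat \<Rightarrow> 'a::comm_ring_1 mpoly_pm" where
  "lagrange_pm N i =
     (\<Prod>m\<in>{..<N} - {i}. var_pm 0 - of_nat m) * (\<Prod>m\<in>{..<N} - {i}. var_pm 1 - of_nat m)"

lemma lagrange_pm_in_poly_ring_n: "n > 1 \<Longrightarrow> lagrange_pm N i \<in> poly_ring_n n"
  unfolding lagrange_pm_def
  by (intro poly_ring_n_mult poly_ring_n_prod poly_ring_n_diff poly_ring_n_var_pm poly_ring_n_of_nat)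
     simp_all

definition to_xy :: "'a::comm_ring_1 mpoly_pm \<Rightarrow> 'a real_quot poly poly" where
  "to_xy = pm_eval (\<lambda>a. [:[:abs_real_quot a:]:])
     (\<lambda>i. if i = 0 then [:0, 1:] else if i = 1 then [:[:0, 1:]:] else 0)"

lemma comm_ring_hom_const_abs_real_quot: "comm_ring_hom (\<lambda>a. [:[:abs_real_quot a:]:])"
  by unfold_locales
    (simp_all add: abs_real_quot_hom.hom_add abs_real_quot_hom.hom_mult abs_real_quot_hom.hom_one)

interpretation to_xy_hom: comm_ring_hom to_xy
  unfolding to_xy_def by (rule comm_ring_hom_pm_eval[OF comm_ring_hom_const_abs_real_quot])

lemma to_xy_var_pm:
  "to_xy (var_pm i) = (if i = 0 then [:0, 1:] else if i = 1 then [:[:0, 1:]:] else 0)"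
  by (simp add: to_xy_def pm_eval_var_pm[OF comm_ring_hom_const_abs_real_quot])

lemma to_xy_lagrange_pm: "to_xy (lagrange_pm N i) = lagrange_xy N i"
proof -
  let ?L = "lagrange_poly N i :: 'a::comm_ring_1 real_quot poly"
  have "to_xy (\<Prod>m\<in>{..<N} - {i}. var_pm 0 - of_nat m :: 'a mpoly_pm) = map_poly (\<lambda>c. [:c:]) ?L"
    by (simp add: to_xy_hom.hom_prod to_xy_hom.hom_minus to_xy_hom.hom_of_nat to_xy_var_pm
        lagrange_poly_def map_poly_const_poly_hom.hom_prod of_nat_poly)
  moreover have "to_xy (\<Prod>m\<in>{..<N} - {i}. var_pm 1 - of_nat m :: 'a mpoly_pm) = [:?L:]"
    by (simp add: to_xy_hom.hom_prod to_xy_hom.hom_minus to_xy_hom.hom_of_nat to_xy_var_pm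
        lagrange_poly_def const_poly_hom.hom_prod of_nat_poly)
  ultimately show ?thesis
    by (simp add: lagrange_pm_def lagrange_xy_def to_xy_hom.hom_mult)
qed

lemma sum_of_powers_len_lagrange_pm_card_le:
  assumes "(-1 :: 'a::comm_ring_1) \<notin> sos" "s \<ge> 1"
    and "sum_of_powers_len S (2 * s) k (\<Sum>i<N. lagrange_pm N i ^ (2 * s) :: 'a mpoly_pm)"
  shows "N \<le> k"
proof -
  obtain g where g: "(\<Sum>i<N. lagrange_pm N i ^ (2 * s) :: 'a mpoly_pm) = (\<Sum>j<k. g j ^ (2 * s))"
    using assms(3) unfolding sum_of_powers_len_def by blast
  show ?thesis
  proof (rule lagrange_power_sum.card_le)
    show "lagrange_power_sum N k s (\<lambda>j. to_xy (g j))"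
    proof
      show "real_ring TYPE('a real_quot)" by (rule real_ring_real_quot[OF assms(1)])
      show "(\<Sum>j<k. to_xy (g j) ^ (2 * s)) = (\<Sum>i<N. lagrange_xy N i ^ (2 * s))"
        using arg_cong[OF g, of to_xy]
        by (simp add: to_xy_hom.hom_sum to_xy_hom.hom_power to_xy_lagrange_pm)
    qed (rule assms(2))
  qed
qed

lemma pythagoras_number_eq_infinity:
  assumes "\<And>l. \<exists>y\<in>S. sum_of_powers S m y \<and> \<not> (\<exists>k\<le>l. sum_of_powers_len S m k y)"
  shows "pythagoras_number S m = \<infinity>"
proof -
  have "\<not> (\<exists>l>0. \<forall>y. y \<in> S \<and> sum_of_powers S m y \<longrightarrow> (\<exists>k\<le>l. sum_of_powers_len S m k y))"
    using assms by blast
  then show ?thesis unfolding pythagoras_number_def by (simp only: if_False)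
qed

theorem mainTheorem3:
  fixes s n :: nat
  assumes "s \<ge> 1" and "n > 1"
    and "\<not> sum_of_powers (UNIV :: 'a::comm_ring_1 set) 2 (-1)"
  shows "pythagoras_number (poly_ring_n n :: 'a mpoly_pm set) (2 * s) = \<infinity>"
proof (rule pythagoras_number_eq_infinity)
  fix l
  let ?S = "poly_ring_n n :: 'a mpoly_pm set"
  let ?y = "\<Sum>i<Suc l. lagrange_pm (Suc l) i ^ (2 * s) :: 'a mpoly_pm"
  have lagrange_in: "lagrange_pm (Suc l) i \<in> ?S" for i
    using assms(2) by (rule lagrange_pm_in_poly_ring_n)
  have "?y \<in> ?S"
    by (intro poly_ring_n_sum poly_ring_n_power lagrange_in)
  moreover have "sum_of_powers ?S (2 * s) ?y"
    unfolding sum_of_powers_def sum_of_powers_len_def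
    by (intro exI[of _ "Suc l"] exI[of _ "lagrange_pm (Suc l)"]) (simp add: lagrange_in)
  moreover have "(-1 :: 'a) \<notin> sos"
    using assms(3) by (simp add: sum_of_powers_2_iff_sos)
  then have "\<not> (\<exists>k\<le>l. sum_of_powers_len ?S (2 * s) k ?y)"
    using sum_of_powers_len_lagrange_pm_card_le[OF _ assms(1)] by fastforce
  ultimately show "\<exists>y\<in>?S. sum_of_powers ?S (2 * s) y \<and> \<not> (\<exists>k\<le>l. sum_of_powers_len ?S (2 * s) k y)"
    by (intro bexI[of _ ?y]) auto
qed

end
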